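(* There is a function $\varepsilon\colon\mathbb{N}\to\mathbb{R}$ with $\varepsilon(n)\to0$ as $n\to\infty$ such that for every positive integer $n$ and every function $f\colon\{0,1\}^n\to\mathbb{R}$ with a unique global minimum, the expected optimization time of the (1+1)~EA minimizing $f$ is at least $(1-\varepsilon(n))\,\mathrm{e}\, n\ln(n)$.
   Context: The (1+1)~EA minimizing $f\colon\{0,1\}^n\to\mathbb{R}$: choose $x^{(0)}\in\{0,1\}^n$ uniformly at random; for $t=0,1,2,\dots$, sample $y^{(t)}$ by flipping each bit of $x^{(t)}$ independently with probability $1/n$; set $x^{(t+1)}:=y^{(t)}$ if $f(y^{(t)})\le f(x^{(t)})$ and $x^{(t+1)}:=x^{(t)}$ otherwise. The optimization time is the random variable $T_f=\min\{t\in\mathbb{N}: f(x^{(t)})=\min_{z\in\{0,1\}^n}f(z)\}$. *)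

theory Defs
  imports "HOL-Probability.Probability"
begin

text \<open>Bit strings of length n are represented as functions nat => bool that are False
  outside {..<n}; x i is the i-th bit.\<close>

definition bitstrings :: "nat \<Rightarrow> (nat \<Rightarrow> bool) set" where
  "bitstrings n = {x. \<forall>i\<ge>n. \<not> x i}"

definition ea_init :: "nat \<Rightarrow> (nat \<Rightarrow> bool) pmf" where
  "ea_init n = Pi_pmf {..<n} False (\<lambda>_. bernoulli_pmf (1/2))"

definition mutate :: "nat \<Rightarrow> (nat \<Rightarrow> bool) \<Rightarrow> (nat \<Rightarrow> bool) pmf" where
  "mutate n x = map_pmf (\<lambda>fl i. x i \<noteq> fl i)
                   (Pi_pmf {..<n} False (\<lambda>_. bernoulli_pmf (1 / real n)))"

definition ea_step :: "nat \<Rightarrow> ((nat \<Rightarrow> bool) \<Rightarrow> real) \<Rightarrow> (nat \<Rightarrow> bool) \<Rightarrow> (nat \<Rightarrow> bool) pmf" where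
  "ea_step n f x = map_pmf (\<lambda>y. if f y \<le> f x then y else x) (mutate n x)"

fun ea_traj :: "nat \<Rightarrow> ((nat \<Rightarrow> bool) \<Rightarrow> real) \<Rightarrow> nat \<Rightarrow> (nat \<Rightarrow> bool) list pmf" where
  "ea_traj n f 0 = map_pmf (\<lambda>x. [x]) (ea_init n)"
| "ea_traj n f (Suc t) =
     bind_pmf (ea_traj n f t) (\<lambda>xs. map_pmf (\<lambda>y. xs @ [y]) (ea_step n f (last xs)))"

definition opt_value :: "nat \<Rightarrow> ((nat \<Rightarrow> bool) \<Rightarrow> real) \<Rightarrow> real" where
  "opt_value n f = Min (f ` bitstrings n)"

text \<open>Expected optimization time E[T_f] = sum over t of Pr[T_f > t]
  (tail-sum formula, in ennreal so that an infinite expectation is allowed);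
  T_f > t iff none of x0..xt is optimal.\<close>
definition expected_opt_time :: "nat \<Rightarrow> ((nat \<Rightarrow> bool) \<Rightarrow> real) \<Rightarrow> ennreal" where
  "expected_opt_time n f =
     (\<Sum>t. ennreal (measure_pmf.prob (ea_traj n f t)
                      {xs. \<forall>x\<in>set xs. f x \<noteq> opt_value n f}))"

end

(* Let z be the unique optimum and d(x) the Hamming distance from x to z. For a weight
   0 < v < 1 the potential (1 - v)^d(x) equals 1 exactly at z. Elitist selection keeps the parent
   or the offspring, so one step raises the expected potential at most to that of the maximum of
   the two, and an exact computation over the independent bit flips shows that, as long as
   d(x) <= zeta n, the result is at most (1 - v e^(-c/n))^d(x), with c slightly above 1/e; for
   d(x) > zeta n the potential is exponentially small anyway. Letting the weight decay by the
   factor e^(-c/n) per step, the expected potential of x_h with weight e^(-c) is at most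
   ((2 - v_h)/2)^n + h exp(-Omega(n^(delta/2))), where v_h = e^(-c(h+n)/n), and this bounds
   Pr[x_h = z]. For h below (1 - delta) e n ln n the bound is o(1), so the tail sum gives
   E[T] >= (1 - 2 delta) e n ln n for large n, and a diagonal choice of delta yields epsilon. *)

theory Submission
  imports Defs "HOL-Real_Asymp.Real_Asymp"
begin

lemma finite_bitstrings: "finite (bitstrings n)"
proof (rule finite_subset)
  show "bitstrings n \<subseteq> (\<lambda>S i. i \<in> S) ` Pow {..<n}"
  proof
    fix x assume "x \<in> bitstrings n"
    then have "{i. x i} \<in> Pow {..<n}" by (auto simp: bitstrings_def) (meson not_less)
    then show "x \<in> (\<lambda>S i. i \<in> S) ` Pow {..<n}" by (rule rev_image_eqI) simp
  qed
qed simp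

definition flip_pmf :: "nat \<Rightarrow> real \<Rightarrow> (nat \<Rightarrow> bool) pmf" where
  "flip_pmf n p = Pi_pmf {..<n} False (\<lambda>_. bernoulli_pmf p)"

lemma set_pmf_Pi_pmf_bitstrings: "set_pmf (Pi_pmf {..<n} False q) \<subseteq> bitstrings n"
  using set_Pi_pmf_subset[of "{..<n}" False q] by (auto simp: bitstrings_def)

lemma finite_set_flip_pmf: "finite (set_pmf (flip_pmf n p))"
  unfolding flip_pmf_def by (rule finite_subset[OF set_pmf_Pi_pmf_bitstrings finite_bitstrings])

lemma integrable_flip_pmf: "integrable (measure_pmf (flip_pmf n p)) (g :: _ \<Rightarrow> real)"
  by (rule integrable_measure_pmf_finite[OF finite_set_flip_pmf])

lemma mutate_eq_flip_pmf: "mutate n x = map_pmf (\<lambda>fl i. x i \<noteq> fl i) (flip_pmf n (1 / real n))"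
  by (simp add: mutate_def flip_pmf_def)

lemma set_pmf_mutate_subset: "x \<in> bitstrings n \<Longrightarrow> set_pmf (mutate n x) \<subseteq> bitstrings n"
  unfolding mutate_def using set_pmf_Pi_pmf_bitstrings[of n] by (auto simp: bitstrings_def)

lemma set_pmf_ea_step_subset: "x \<in> bitstrings n \<Longrightarrow> set_pmf (ea_step n f x) \<subseteq> bitstrings n"
  unfolding ea_step_def using set_pmf_mutate_subset[of x n] by auto

lemma set_pmf_ea_init_subset: "set_pmf (ea_init n) \<subseteq> bitstrings n"
  unfolding ea_init_def by (rule set_pmf_Pi_pmf_bitstrings)

lemma finite_set_pmf_ea_step: "x \<in> bitstrings n \<Longrightarrow> finite (set_pmf (ea_step n f x))"
  by (rule finite_subset[OF set_pmf_ea_step_subset finite_bitstrings])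

locale unique_minimizer =
  fixes n :: nat and f :: "(nat \<Rightarrow> bool) \<Rightarrow> real" and z :: "nat \<Rightarrow> bool"
  assumes minimizer_in_bitstrings: "z \<in> bitstrings n"
    and minimal: "\<And>y. y \<in> bitstrings n \<Longrightarrow> f z \<le> f y"
    and unique: "\<And>y. y \<in> bitstrings n \<Longrightarrow> f y \<le> f z \<Longrightarrow> y = z"

lemma unique_minimizerE:
  assumes "\<exists>!z. z \<in> bitstrings n \<and> (\<forall>y\<in>bitstrings n. f z \<le> f y)"
  obtains z where "unique_minimizer n f z"
proof -
  obtain z where z: "z \<in> bitstrings n" "\<forall>y\<in>bitstrings n. f z \<le> f y"
    and uniq: "\<And>y. y \<in> bitstrings n \<Longrightarrow> \<forall>x\<in>bitstrings n. f y \<le> f x \<Longrightarrow> y = z"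
    using assms by blast
  have "unique_minimizer n f z"
  proof
    fix y assume y: "y \<in> bitstrings n" and "f y \<le> f z"
    then have "\<forall>x\<in>bitstrings n. f y \<le> f x" using z(2) by fastforce
    then show "y = z" using uniq y by blast
  qed (use z in auto)
  then show thesis by (rule that)
qed

context unique_minimizer
begin

lemma opt_value_eq: "opt_value n f = f z"
  unfolding opt_value_def
proof (rule Min_eqI)
  show "finite (f ` bitstrings n)" using finite_bitstrings by simp
  show "\<And>y. y \<in> f ` bitstrings n \<Longrightarrow> f z \<le> y" using minimal by auto
  show "f z \<in> f ` bitstrings n" using minimizer_in_bitstrings by simp
qed

lemma set_pmf_ea_step_minimizer: "set_pmf (ea_step n f z) = {z}"
proof -
  have "set_pmf (ea_step n f z) \<subseteq> {z}"
  proof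
    fix y assume "y \<in> set_pmf (ea_step n f z)"
    then obtain y' where y': "y' \<in> set_pmf (mutate n z)" and y: "y = (if f y' \<le> f z then y' else z)"
      unfolding ea_step_def by auto
    have "y' \<in> bitstrings n"
      using y' set_pmf_mutate_subset[OF minimizer_in_bitstrings] by blast
    then have "f y' \<le> f z \<Longrightarrow> y' = z" by (rule unique)
    then show "y \<in> {z}" using y by auto
  qed
  moreover have "set_pmf (ea_step n f z) \<noteq> {}" by (rule set_pmf_not_empty)
  ultimately show ?thesis by blast
qed

lemma set_pmf_ea_traj:
  assumes "xs \<in> set_pmf (ea_traj n f t)"
  shows "xs \<noteq> []" "set xs \<subseteq> bitstrings n" "z \<in> set xs \<Longrightarrow> last xs = z"
proof -
  have "xs \<noteq> [] \<and> set xs \<subseteq> bitstrings n \<and> (z \<in> set xs \<longrightarrow> last xs = z)"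
    using assms
  proof (induction t arbitrary: xs)
    case 0
    then show ?case using set_pmf_ea_init_subset[of n] by auto
  next
    case (Suc t)
    then obtain ys y where ys: "ys \<in> set_pmf (ea_traj n f t)"
      and y: "y \<in> set_pmf (ea_step n f (last ys))" and xs: "xs = ys @ [y]"
      by auto
    from Suc.IH[OF ys] have IH: "ys \<noteq> []" "set ys \<subseteq> bitstrings n" "z \<in> set ys \<longrightarrow> last ys = z"
      by auto
    have "y \<in> bitstrings n"
      using set_pmf_ea_step_subset[of "last ys" n f] y IH(1,2) last_in_set by blast
    moreover have "z \<in> set xs \<longrightarrow> y = z"
      using IH(3) y set_pmf_ea_step_minimizer xs by auto
    ultimately show ?case using xs IH by auto
  qed
  then show "xs \<noteq> []" "set xs \<subseteq> bitstrings n" "z \<in> set xs \<Longrightarrow> last xs = z" by auto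
qed

end

definition hamming_dist :: "nat \<Rightarrow> (nat \<Rightarrow> bool) \<Rightarrow> (nat \<Rightarrow> bool) \<Rightarrow> nat" where
  "hamming_dist n z x = card {i\<in>{..<n}. x i \<noteq> z i}"

lemma hamming_dist_le: "hamming_dist n z x \<le> n"
proof -
  have "hamming_dist n z x \<le> card {..<n}"
    unfolding hamming_dist_def by (rule card_mono) auto
  then show ?thesis by simp
qed

lemma hamming_dist_self [simp]: "hamming_dist n z z = 0"
  by (simp add: hamming_dist_def)

definition flip_count :: "nat set \<Rightarrow> (nat \<Rightarrow> bool) \<Rightarrow> nat" where
  "flip_count S fl = card {i\<in>S. fl i}"

lemma hamming_dist_flip:
  fixes n :: nat and x z fl :: "nat \<Rightarrow> bool"
  defines "W \<equiv> {i\<in>{..<n}. x i \<noteq> z i}"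
  shows "hamming_dist n z (\<lambda>i. x i \<noteq> fl i) + flip_count W fl
       = hamming_dist n z x + flip_count ({..<n} - W) fl"
proof -
  have "{i\<in>{..<n}. (x i \<noteq> fl i) \<noteq> z i} = (W - {i\<in>W. fl i}) \<union> {i\<in>{..<n} - W. fl i}"
    unfolding W_def by auto
  then have "card {i\<in>{..<n}. (x i \<noteq> fl i) \<noteq> z i} = card (W - {i\<in>W. fl i}) + card {i\<in>{..<n} - W. fl i}"
    by (simp only:) (rule card_Un_disjoint; auto simp: W_def)
  moreover have "card (W - {i\<in>W. fl i}) = card W - card {i\<in>W. fl i}"
    by (rule card_Diff_subset) (auto simp: W_def)
  moreover have "card {i\<in>W. fl i} \<le> card W"
    by (rule card_mono) (auto simp: W_def)
  ultimately show ?thesis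
    by (simp add: hamming_dist_def flip_count_def W_def)
qed

section \<open>Expectations under independent bit flips\<close>

lemma prod_if_eq_power:
  assumes "finite S"
  shows "(\<Prod>i\<in>S. if P i then (c::real) else e) = c ^ card {i\<in>S. P i} * e ^ card {i\<in>S. \<not> P i}"
proof -
  have "(\<Prod>i\<in>S. if P i then c else e) = prod (\<lambda>_. c) (S \<inter> {x. P x}) * prod (\<lambda>_. e) (S \<inter> - {x. P x})"
    by (rule prod.If_cases[OF assms])
  also have "S \<inter> {x. P x} = {i\<in>S. P i}" by auto
  also have "S \<inter> - {x. P x} = {i\<in>S. \<not> P i}" by auto
  finally show ?thesis by simp
qed

lemma prod_if_mem_eq_power:
  assumes "finite S" "W \<subseteq> S"
  shows "(\<Prod>i\<in>S. if i \<in> W then (c::real) else e) = c ^ card W * e ^ (card S - card W)"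
proof -
  have "{i\<in>S. i \<in> W} = W" "{i\<in>S. i \<notin> W} = S - W" using assms(2) by auto
  then show ?thesis
    using prod_if_eq_power[OF assms(1), of "\<lambda>i. i \<in> W"] card_Diff_subset[OF finite_subset[OF assms(2,1)] assms(2)]
    by simp
qed

lemma expectation_flip_pmf_prod:
  fixes g :: "nat \<Rightarrow> bool \<Rightarrow> real"
  assumes "0 \<le> p" "p \<le> 1" and "\<And>i b. g i b \<ge> 0"
  shows "measure_pmf.expectation (flip_pmf n p) (\<lambda>fl. \<Prod>i<n. g i (fl i))
       = (\<Prod>i<n. g i True * p + g i False * (1 - p))"
proof -
  have "measure_pmf.expectation (flip_pmf n p) (\<lambda>fl. \<Prod>i<n. g i (fl i))
     = (\<Prod>i<n. measure_pmf.expectation (bernoulli_pmf p) (g i))"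
    unfolding flip_pmf_def
    by (rule expectation_prod_Pi_pmf) (auto simp: assms(3) intro!: integrable_measure_pmf_finite)
  then show ?thesis using assms(1,2) by (simp add: integral_bernoulli_pmf)
qed

context
  fixes n :: nat and p w :: real and W :: "nat set"
  assumes W: "W \<subseteq> {..<n}" and p: "0 \<le> p" "p \<le> 1" and w: "0 \<le> w"
begin

lemma power_flip_count_eq_prod:
  "w ^ flip_count W fl = (\<Prod>i<n. if i \<in> W \<and> fl i then w else 1)"
proof -
  have "{i\<in>{..<n}. i \<in> W \<and> fl i} = {i\<in>W. fl i}" using W by auto
  then show ?thesis by (simp add: prod_if_eq_power flip_count_def)
qed

lemma expectation_power_flip_count:
  "measure_pmf.expectation (flip_pmf n p) (\<lambda>fl. w ^ flip_count W fl) = (w * p + (1 - p)) ^ card W"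
proof -
  have "measure_pmf.expectation (flip_pmf n p) (\<lambda>fl. w ^ flip_count W fl)
      = (\<Prod>i<n. (if i \<in> W then w else 1) * p + 1 * (1 - p))"
    unfolding power_flip_count_eq_prod
    by (subst expectation_flip_pmf_prod) (use p w in \<open>auto intro!: prod.cong\<close>)
  also have "\<dots> = (\<Prod>i<n. if i \<in> W then w * p + (1 - p) else 1)"
    by (rule prod.cong) auto
  finally show ?thesis using W by (simp add: prod_if_mem_eq_power)
qed

lemma expectation_power_flip_count_if_outside_zero:
  "measure_pmf.expectation (flip_pmf n p)
     (\<lambda>fl. if flip_count ({..<n} - W) fl = 0 then w ^ flip_count W fl else 0)
   = (w * p + (1 - p)) ^ card W * (1 - p) ^ (n - card W)"
proof -
  have no_outside: "(if flip_count ({..<n} - W) fl = 0 then 1 else 0)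
                  = (\<Prod>i<n. if i \<notin> W \<and> fl i then 0 else (1::real))" for fl
  proof -
    have "{i\<in>{..<n}. i \<notin> W \<and> fl i} = {i\<in>{..<n} - W. fl i}" by auto
    then have "(\<Prod>i<n. if i \<notin> W \<and> fl i then 0 else (1::real)) = 0 ^ flip_count ({..<n} - W) fl"
      by (simp add: prod_if_eq_power flip_count_def)
    then show ?thesis by (simp add: power_0_left)
  qed
  have "(if flip_count ({..<n} - W) fl = 0 then w ^ flip_count W fl else 0)
      = (\<Prod>i<n. (if i \<in> W \<and> fl i then w else 1) * (if i \<notin> W \<and> fl i then 0 else 1))" for fl
    using no_outside[of fl] by (simp add: prod.distrib power_flip_count_eq_prod split: if_splits)
  then have "measure_pmf.expectation (flip_pmf n p)
      (\<lambda>fl. if flip_count ({..<n} - W) fl = 0 then w ^ flip_count W fl else 0)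
      = (\<Prod>i<n. if i \<in> W then w * p + (1 - p) else 1 - p)"
    by (simp only:) (subst expectation_flip_pmf_prod; use p w in \<open>auto intro!: prod.cong\<close>)
  also have "\<dots> = (w * p + (1 - p)) ^ card W * (1 - p) ^ (n - card W)"
    using W by (simp add: prod_if_mem_eq_power)
  finally show ?thesis .
qed

lemma expectation_flip_count_times_power:
  "measure_pmf.expectation (flip_pmf n p) (\<lambda>fl. real (flip_count W fl) * w ^ (flip_count W fl - 1))
   = real (card W) * p * (w * p + (1 - p)) ^ (card W - 1)"
proof -
  have finW: "finite W" using W finite_subset by blast
  \<comment> \<open>flip_count W fl * w ^ (flip_count W fl - 1) is the sum over k in W of the
    indicator that bit k flips times w to the number of other flips in W\<close>
  define g where "g k i b = (if i = k then (if b then 1 else 0) else if i \<in> W \<and> b then w else (1::real))"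
    for k i b
  have g_prod: "(\<Prod>i<n. g k i (fl i)) = (if fl k then w ^ (flip_count W fl - 1) else 0)"
    if k: "k \<in> W" for k fl
  proof -
    have kn: "k \<in> {..<n}" using k W by auto
    have "(\<Prod>i<n. g k i (fl i)) = g k k (fl k) * (\<Prod>i\<in>{..<n} - {k}. if i \<in> W \<and> fl i then w else 1)"
      by (subst prod.remove[OF _ kn]) (auto simp: g_def intro!: prod.cong)
    also have "{i\<in>{..<n} - {k}. i \<in> W \<and> fl i} = {i\<in>W. fl i} - {k}" using W by auto
    ultimately show ?thesis
      using k finW by (auto simp: g_def prod_if_eq_power flip_count_def)
  qed
  have pointwise: "real (flip_count W fl) * w ^ (flip_count W fl - 1) = (\<Sum>k\<in>W. \<Prod>i<n. g k i (fl i))" for fl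
  proof -
    have "(\<Sum>k\<in>W. \<Prod>i<n. g k i (fl i)) = (\<Sum>k\<in>W. if fl k then w ^ (flip_count W fl - 1) else 0)"
      by (rule sum.cong) (simp_all add: g_prod)
    also have "\<dots> = (\<Sum>k\<in>{k\<in>W. fl k}. w ^ (flip_count W fl - 1))"
      by (rule sum.inter_filter[symmetric]) (rule finW)
    finally show ?thesis by (simp add: flip_count_def)
  qed
  have single_term: "measure_pmf.expectation (flip_pmf n p) (\<lambda>fl. \<Prod>i<n. g k i (fl i))
              = p * (w * p + (1 - p)) ^ (card W - 1)" if k: "k \<in> W" for k
  proof -
    have kn: "k \<in> {..<n}" using k W by auto
    have "measure_pmf.expectation (flip_pmf n p) (\<lambda>fl. \<Prod>i<n. g k i (fl i))
        = (\<Prod>i<n. g k i True * p + g k i False * (1 - p))"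
      using p w by (intro expectation_flip_pmf_prod) (auto simp: g_def)
    also have "\<dots> = p * (\<Prod>i\<in>{..<n} - {k}. if i \<in> W - {k} then w * p + (1 - p) else 1)"
      by (subst prod.remove[OF _ kn]) (auto simp: g_def intro!: prod.cong split: if_splits)
    also have "\<dots> = p * (w * p + (1 - p)) ^ (card W - 1)"
      using W k finW by (subst prod_if_mem_eq_power) auto
    finally show ?thesis .
  qed
  have "measure_pmf.expectation (flip_pmf n p) (\<lambda>fl. real (flip_count W fl) * w ^ (flip_count W fl - 1))
      = (\<Sum>k\<in>W. measure_pmf.expectation (flip_pmf n p) (\<lambda>fl. \<Prod>i<n. g k i (fl i)))"
    unfolding pointwise by (rule Bochner_Integration.integral_sum) (rule integrable_flip_pmf)
  also have "\<dots> = real (card W) * p * (w * p + (1 - p)) ^ (card W - 1)"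
    using single_term by simp
  finally show ?thesis .
qed

end

section \<open>Drift of the potential\<close>

text \<open>Unlike the maximum, the right-hand sides are combinations of products over the bits of
  a flip vector (A and B count the flips inside and outside the positions where x differs from z),
  so their expectations under flip_pmf factorize.\<close>

lemma max_power_le_products:
  fixes u :: real and A B d d' :: nat
  assumes u: "0 < u" "u \<le> 1" and dd: "d' + A = d + B"
  shows "max (u^d) (u^d') \<le> u^d * (1 + (if B = 0 then (1/u)^A else 0) - (if B = 0 then 1 else 0)
                                     + real A * (1/u)^(A-1) - real A)"
proof -
  define w where "w = 1/u"
  have w1: "1 \<le> w" and uw: "u * w = 1" using u by (simp_all add: w_def)
  have ud: "0 < u^d" using u by simp
  have "u^d' * u^A * w^A = u^d * u^B * w^A" using dd by (metis power_add)
  then have ud': "u^d' = u^d * u^B * w^A" using uw by (simp add: mult.assoc power_mult_distrib[symmetric])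
  have wA: "1 \<le> w^A" and wA1: "1 \<le> w^(A-1)" using w1 by (simp_all add: one_le_power)
  have AwA: "real A \<le> real A * w^(A-1)" using wA1 by (simp add: mult_le_cancel_left1)
  show ?thesis
  proof (cases "B = 0")
    case True
    have "u^d \<le> u^d * w^A" using mult_left_mono[OF wA less_imp_le[OF ud]] by simp
    then have "max (u^d) (u^d') \<le> u^d * w^A" using ud' True by simp
    also have "\<dots> \<le> u^d * (1 + w^A - 1 + real A * w^(A-1) - real A)"
      using AwA ud by (intro mult_left_mono) auto
    finally show ?thesis using True by (simp add: w_def)
  next
    case B: False
    show ?thesis
    proof (cases "A = 0")
      case True
      then have "u^d' \<le> u^d" using ud' ud u B by (simp add: mult_left_le power_le_one)
      then show ?thesis using True B by simp
    next
      case A: False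
      have "u^B * w^A \<le> u * w^A" using u B w1 by (intro mult_right_mono power_decreasing[of 1 B u, simplified]) auto
      also have "u * w^A = w^(A-1)" using A uw by (cases A) (auto simp: mult.assoc[symmetric])
      finally have "u^d' \<le> u^d * w^(A-1)" using ud' ud by (simp add: mult.assoc mult_left_mono)
      moreover have "u^d \<le> u^d * w^(A-1)" using mult_left_mono[OF wA1 less_imp_le[OF ud]] by simp
      ultimately have "max (u^d) (u^d') \<le> u^d * w^(A-1)" by simp
      also have "\<dots> \<le> u^d * (1 + real A * w^(A-1) - real A)"
      proof (rule mult_left_mono)
        have "0 \<le> (real A - 1) * (w^(A-1) - 1)" using A wA1 by simp
        then show "w^(A-1) \<le> 1 + real A * w^(A-1) - real A" by (simp add: algebra_simps)
      qed (use ud in simp)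
      finally show ?thesis using B by (simp add: w_def)
    qed
  qed
qed

lemma max_power_le_power_inverse:
  fixes u :: real and A B d d' :: nat
  assumes u: "0 < u" "u \<le> 1" and dd: "d' + A = d + B"
  shows "max (u^d) (u^d') \<le> u^d * (1/u)^A"
proof -
  have "u^d' * u^A * (1/u)^A = u^d * u^B * (1/u)^A" using dd by (metis power_add)
  then have "u^d' = u^d * u^B * (1/u)^A" using u by (simp add: power_one_over)
  moreover have "u^B \<le> 1" "1 \<le> (1/u)^A" using u by (simp_all add: power_le_one one_le_power)
  ultimately show ?thesis
    using u by (auto simp: max_def mult.assoc intro!: mult_left_mono mult_le_one)
qed

context
  fixes n :: nat and p u :: real and x z :: "nat \<Rightarrow> bool"
  assumes p: "0 \<le> p" "p \<le> 1" and u: "0 < u" "u \<le> 1"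
begin

lemma expectation_max_power_hamming_dist_le:
  defines "d \<equiv> hamming_dist n z x" and "a \<equiv> p * (1/u - 1)"
  shows "measure_pmf.expectation (flip_pmf n p) (\<lambda>fl. max (u^d) (u ^ hamming_dist n z (\<lambda>i. x i \<noteq> fl i)))
         \<le> u^d * (1 + (1 - p)^(n-d) * ((1+a)^d - 1) + real d * p * ((1+a)^(d-1) - 1))"
proof -
  define W where "W = {i\<in>{..<n}. x i \<noteq> z i}"
  have W: "W \<subseteq> {..<n}" and cardW: "card W = d" by (auto simp: W_def d_def hamming_dist_def)
  define w where "w = 1/u"
  have w: "0 \<le> w" using u by (simp add: w_def)
  have aw: "w * p + (1 - p) = 1 + a" by (simp add: a_def w_def algebra_simps)
  have E1: "measure_pmf.expectation (flip_pmf n p)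
      (\<lambda>fl. if flip_count ({..<n} - W) fl = 0 then w ^ flip_count W fl else 0) = (1+a)^d * (1-p)^(n-d)"
    using expectation_power_flip_count_if_outside_zero[OF W p w] by (simp add: aw cardW)
  have E0: "measure_pmf.expectation (flip_pmf n p)
      (\<lambda>fl. if flip_count ({..<n} - W) fl = 0 then 1 else 0) = (1-p)^(n-d)"
    using expectation_power_flip_count_if_outside_zero[OF W p zero_le_one]
    unfolding power_one by (simp add: cardW)
  have E2: "measure_pmf.expectation (flip_pmf n p)
      (\<lambda>fl. real (flip_count W fl) * w ^ (flip_count W fl - 1)) = real d * p * (1+a)^(d-1)"
    using expectation_flip_count_times_power[OF W p w] by (simp add: aw cardW)
  have E3: "measure_pmf.expectation (flip_pmf n p) (\<lambda>fl. real (flip_count W fl)) = real d * p"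
    using expectation_flip_count_times_power[OF W p zero_le_one] by (simp add: cardW)
  define R where "R fl = u^d * (1 + (if flip_count ({..<n} - W) fl = 0 then w ^ flip_count W fl else 0)
      - (if flip_count ({..<n} - W) fl = 0 then 1 else 0)
      + real (flip_count W fl) * w ^ (flip_count W fl - 1) - real (flip_count W fl))" for fl
  have "max (u^d) (u ^ hamming_dist n z (\<lambda>i. x i \<noteq> fl i)) \<le> R fl" for fl
    unfolding R_def w_def
    by (rule max_power_le_products[OF u]) (use hamming_dist_flip in \<open>simp add: W_def d_def\<close>)
  then have "measure_pmf.expectation (flip_pmf n p) (\<lambda>fl. max (u^d) (u ^ hamming_dist n z (\<lambda>i. x i \<noteq> fl i)))
      \<le> measure_pmf.expectation (flip_pmf n p) R"
    by (intro integral_mono integrable_flip_pmf)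
  also have "\<dots> = u^d * (1
      + measure_pmf.expectation (flip_pmf n p)
          (\<lambda>fl. if flip_count ({..<n} - W) fl = 0 then w ^ flip_count W fl else 0)
      - measure_pmf.expectation (flip_pmf n p) (\<lambda>fl. if flip_count ({..<n} - W) fl = 0 then 1 else 0)
      + measure_pmf.expectation (flip_pmf n p) (\<lambda>fl. real (flip_count W fl) * w ^ (flip_count W fl - 1))
      - measure_pmf.expectation (flip_pmf n p) (\<lambda>fl. real (flip_count W fl)))"
    unfolding R_def by (simp add: integrable_flip_pmf)
  also have "\<dots> = u^d * (1 + (1+a)^d * (1-p)^(n-d) - (1-p)^(n-d) + real d * p * (1+a)^(d-1) - real d * p)"
    by (simp only: E0 E1 E2 E3)
  finally show ?thesis by (simp add: algebra_simps)
qed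

lemma expectation_max_power_hamming_dist_le_crude:
  defines "d \<equiv> hamming_dist n z x" and "a \<equiv> p * (1/u - 1)"
  shows "measure_pmf.expectation (flip_pmf n p) (\<lambda>fl. max (u^d) (u ^ hamming_dist n z (\<lambda>i. x i \<noteq> fl i)))
         \<le> u^d * (1+a)^d"
proof -
  define W where "W = {i\<in>{..<n}. x i \<noteq> z i}"
  have W: "W \<subseteq> {..<n}" and cardW: "card W = d" by (auto simp: W_def d_def hamming_dist_def)
  have "max (u^d) (u ^ hamming_dist n z (\<lambda>i. x i \<noteq> fl i)) \<le> u^d * (1/u) ^ flip_count W fl" for fl
    by (rule max_power_le_power_inverse[OF u]) (use hamming_dist_flip in \<open>simp add: W_def d_def\<close>)
  then have "measure_pmf.expectation (flip_pmf n p) (\<lambda>fl. max (u^d) (u ^ hamming_dist n z (\<lambda>i. x i \<noteq> fl i)))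
      \<le> measure_pmf.expectation (flip_pmf n p) (\<lambda>fl. u^d * (1/u) ^ flip_count W fl)"
    by (intro integral_mono integrable_flip_pmf)
  also have "\<dots> = u^d * (1+a)^d"
    using expectation_power_flip_count[OF W p, of "1/u"] u cardW by (simp add: a_def algebra_simps)
  finally show ?thesis .
qed

end

lemma expectation_ea_step_le_max:
  fixes u :: real
  shows "measure_pmf.expectation (ea_step n f x) (\<lambda>y. u ^ hamming_dist n z y)
   \<le> measure_pmf.expectation (flip_pmf n (1 / real n))
        (\<lambda>fl. max (u ^ hamming_dist n z x) (u ^ hamming_dist n z (\<lambda>i. x i \<noteq> fl i)))"
proof -
  have "measure_pmf.expectation (ea_step n f x) (\<lambda>y. u ^ hamming_dist n z y)
      = measure_pmf.expectation (flip_pmf n (1 / real n)) (\<lambda>fl. u ^ hamming_dist n z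
          (if f (\<lambda>i. x i \<noteq> fl i) \<le> f x then (\<lambda>i. x i \<noteq> fl i) else x))"
    unfolding ea_step_def mutate_eq_flip_pmf by (simp only: integral_map_pmf)
  also have "\<dots> \<le> measure_pmf.expectation (flip_pmf n (1 / real n))
        (\<lambda>fl. max (u ^ hamming_dist n z x) (u ^ hamming_dist n z (\<lambda>i. x i \<noteq> fl i)))"
    by (intro integral_mono integrable_flip_pmf) auto
  finally show ?thesis .
qed

lemma exp_minus_one_le:
  fixes x :: real assumes "0 \<le> x" shows "exp x - 1 \<le> x * exp x"
proof -
  have "(1 - x) * exp x \<le> exp (-x) * exp x"
    using exp_minus_ge[of x] by (intro mult_right_mono) auto
  then show ?thesis by (simp add: exp_minus_inverse algebra_simps)
qed

lemma one_plus_power_minus_one_le: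
  fixes a :: real assumes "0 \<le> a" shows "(1 + a)^d - 1 \<le> real d * a * exp (real d * a)"
proof -
  have "(1 + a)^d \<le> exp a ^ d" using assms by (intro power_mono) auto
  then have "(1 + a)^d - 1 \<le> exp (real d * a) - 1" by (simp add: exp_of_nat_mult)
  also have "\<dots> \<le> real d * a * exp (real d * a)" using assms by (intro exp_minus_one_le) simp
  finally show ?thesis .
qed

lemma one_minus_inverse_power_le:
  assumes "1 \<le> n" "d \<le> n" shows "(1 - 1 / real n)^(n - d) \<le> exp (real d / n - 1)"
proof -
  have "(1 - 1 / real n)^(n - d) \<le> exp (-(1 / real n))^(n - d)"
    using assms exp_minus_ge[of "1 / real n"] by (intro power_mono) auto
  also have "\<dots> = exp (real (n - d) * (-(1 / real n)))" by (subst exp_of_nat_mult[symmetric]) simp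
  also have "real (n - d) * (-(1 / real n)) = real d / n - 1" using assms by (simp add: of_nat_diff field_simps)
  finally show ?thesis .
qed

lemma divide_one_plus_le_one_minus_exp:
  fixes y :: real assumes "0 \<le> y" shows "y / (1 + y) \<le> 1 - exp (-y)"
proof -
  have "exp (-y) \<le> 1 / (1 + y)" using assms exp_ge_add_one_self[of y] by (simp add: exp_minus field_simps)
  also have "1 / (1 + y) = 1 - y / (1 + y)" using assms by (simp add: field_simps)
  finally show ?thesis by simp
qed

lemma mutation_correction_le:
  fixes a \<zeta> :: real and d n :: nat
  assumes n: "1 \<le> n" "d \<le> n" and a: "0 \<le> a" and d: "real d \<le> \<zeta> * n" "real d * a \<le> 4 * \<zeta>"
  shows "(1 - 1 / real n)^(n - d) * ((1 + a)^d - 1) + real d * (1 / real n) * ((1 + a)^(d - 1) - 1)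
         \<le> real d * a * (exp (4 * \<zeta>) * (exp (\<zeta> - 1) + \<zeta>))"
proof -
  have dn: "real d / n \<le> \<zeta>" using d n by (simp add: field_simps)
  moreover have "0 \<le> real d / n" by simp
  ultimately have "0 \<le> \<zeta>" by linarith
  have P: "(1 + a)^k - 1 \<le> real d * a * exp (4 * \<zeta>)" if "k \<le> d" for k
  proof -
    have "(1 + a)^k - 1 \<le> real k * a * exp (real k * a)" by (rule one_plus_power_minus_one_le[OF a])
    also have "\<dots> \<le> real d * a * exp (real d * a)"
    proof -
      have "real k * a \<le> real d * a" using a that by (intro mult_right_mono) auto
      then show ?thesis using a that by (intro mult_mono) auto
    qed
    also have "\<dots> \<le> real d * a * exp (4 * \<zeta>)" using a d by (intro mult_left_mono) auto
    finally show ?thesis .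
  qed
  have nonneg: "0 \<le> (1 + a)^d - 1" "0 \<le> (1 + a)^(d - 1) - 1" using a by (auto simp: one_le_power)
  have "(1 - 1 / real n)^(n - d) \<le> exp (real d / n - 1)" by (rule one_minus_inverse_power_le[OF n])
  also have "\<dots> \<le> exp (\<zeta> - 1)" using dn by simp
  finally have T1: "(1 - 1 / real n)^(n - d) * ((1 + a)^d - 1) \<le> exp (\<zeta> - 1) * (real d * a * exp (4 * \<zeta>))"
    using P[of d] nonneg by (intro mult_mono) auto
  have T2: "real d * (1 / real n) * ((1 + a)^(d - 1) - 1) \<le> \<zeta> * (real d * a * exp (4 * \<zeta>))"
    using dn P[of "d - 1"] nonneg \<open>0 \<le> \<zeta>\<close> by (intro mult_mono) auto
  show ?thesis using T1 T2 by (simp add: algebra_simps)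
qed

lemma mutation_drift_gain:
  fixes c v :: real and n :: nat
  assumes n: "1 \<le> n" and c: "0 \<le> c" "c \<le> 1" and v: "0 \<le> v" "v < 1"
  shows "(1 / real n) * (1 / (1 - v) - 1) * (c - 1 / n) \<le> ((1 - v * exp (-c/n)) - (1 - v)) / (1 - v)"
proof -
  have n0: "0 < real n" using n by simp
  have "(c - 1/n) * (n + c) \<le> c * n"
  proof -
    have "(c - 1/n) * (n + c) = c*n + c*c - 1 - c/n" using n0 by (simp add: field_simps)
    moreover have "c * c \<le> 1" using c by (simp add: mult_le_one)
    moreover have "0 \<le> c/n" using c n0 by simp
    ultimately show ?thesis by linarith
  qed
  then have "(c - 1/n) / n \<le> c/n / (1 + c/n)" using n0 c by (simp add: field_simps)
  also have "\<dots> \<le> 1 - exp (-(c/n))" using c n0 by (intro divide_one_plus_le_one_minus_exp) auto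
  finally have "v / (1 - v) * ((c - 1/n) / n) \<le> v / (1 - v) * (1 - exp (-(c/n)))"
    using v by (intro mult_left_mono) auto
  then show ?thesis using v by (simp add: field_simps)
qed

lemma potential_drift_near_optimum:
  fixes c \<zeta> v :: real and d n :: nat
  assumes n: "1 \<le> n" and c: "1/3 \<le> c" "c \<le> 1"
    and X: "exp (4 * \<zeta>) * (exp (\<zeta> - 1) + \<zeta>) \<le> c - 1/n"
    and v: "0 < v" "v \<le> exp (-c)" and d: "real d \<le> \<zeta> * n" "d \<le> n"
  defines "a \<equiv> (1 / real n) * (1 / (1 - v) - 1)"
  shows "(1 - v)^d * (1 + (1 - 1/real n)^(n - d) * ((1 + a)^d - 1) + real d * (1/real n) * ((1 + a)^(d - 1) - 1))
         \<le> (1 - v * exp (-c/n))^d"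
proof -
  define u where "u = 1 - v * exp (-c/n)"
  have "exp (-c) \<le> 1 / (1 + c)" using c exp_ge_add_one_self[of c] by (simp add: exp_minus field_simps)
  also have "\<dots> \<le> 3/4" using c by (simp add: field_simps)
  finally have v34: "v \<le> 3/4" using v by linarith
  have "1 \<le> 1 / (1 - v)" using v v34 by (simp add: field_simps)
  then have a0: "0 \<le> a" by (simp add: a_def)
  have "0 \<le> \<zeta>"
  proof (rule ccontr)
    assume "\<not> 0 \<le> \<zeta>"
    then have "\<zeta> * n < 0" using n by (simp add: mult_neg_pos)
    then show False using d(1) by simp
  qed
  have "real d * a = (real d / n) * (v / (1 - v))" using v34 by (simp add: a_def field_simps)
  also have "\<dots> \<le> \<zeta> * 4"
    using d n v v34 \<open>0 \<le> \<zeta>\<close> by (intro mult_mono) (auto simp: field_simps)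
  finally have da: "real d * a \<le> 4 * \<zeta>" by simp
  define g where "g = (u - (1 - v)) / (1 - v)"
  have "a * (c - 1/n) \<le> g"
    unfolding a_def u_def g_def by (rule mutation_drift_gain) (use n c v v34 in auto)
  have "(1 - 1/real n)^(n - d) * ((1 + a)^d - 1) + real d * (1/real n) * ((1 + a)^(d - 1) - 1)
        \<le> real d * a * (exp (4 * \<zeta>) * (exp (\<zeta> - 1) + \<zeta>))"
    by (rule mutation_correction_le[OF n(1) d(2) a0 d(1) da])
  also have "\<dots> \<le> real d * (a * (c - 1/n))"
    unfolding mult.assoc using X a0 by (intro mult_left_mono) auto
  also have "\<dots> \<le> real d * g"
    using \<open>a * (c - 1/n) \<le> g\<close> by (intro mult_left_mono) auto
  finally have "1 + (1 - 1/real n)^(n - d) * ((1 + a)^d - 1) + real d * (1/real n) * ((1 + a)^(d - 1) - 1)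
        \<le> 1 + real d * g" by simp
  also have "\<dots> \<le> (1 + g)^d"
  proof (rule Bernoulli_inequality)
    have "exp (-c/n) \<le> 1" using c n by simp
    then have "v * exp (-c/n) \<le> v" using v by (intro mult_left_le) auto
    then have "0 \<le> g" unfolding g_def u_def using v34 by (intro divide_nonneg_pos) auto
    then show "-1 \<le> g" by simp
  qed
  finally have "(1 - v)^d * (1 + (1 - 1/real n)^(n - d) * ((1 + a)^d - 1) + real d * (1/real n) * ((1 + a)^(d - 1) - 1))
        \<le> (1 - v)^d * (1 + g)^d"
    using v34 by (intro mult_left_mono) auto
  also have "\<dots> = ((1 - v) * (1 + g))^d"
    by (simp only: power_mult_distrib)
  also have "(1 - v) * (1 + g) = u"
    using v34 by (simp add: g_def field_simps)
  finally show ?thesis by (simp add: u_def)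
qed

lemma potential_far_from_optimum:
  fixes \<zeta> v vmin :: real and d n :: nat
  assumes n: "2 \<le> n" and \<zeta>: "0 < \<zeta>" and v: "0 < v" "v < 1" and vmin: "0 \<le> vmin" "vmin \<le> v"
    and d: "\<zeta> * n < real d"
  shows "(1 - v)^d * (1 + (1 / real n) * (1 / (1 - v) - 1))^d \<le> exp (- (vmin * \<zeta> * n / 2))"
proof -
  have half: "1 / real n \<le> 1/2" using n by simp
  have "(1 - v) * (1 + (1 / real n) * (1 / (1 - v) - 1)) = 1 - v * (1 - 1/n)"
    using v n by (simp add: field_simps)
  then have "(1 - v)^d * (1 + (1 / real n) * (1 / (1 - v) - 1))^d = (1 - v * (1 - 1/n))^d"
    by (simp flip: power_mult_distrib)
  also have "\<dots> \<le> exp (-(v * (1 - 1/n)))^d"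
  proof (rule power_mono)
    have "v * (1 - 1/n) \<le> v * 1" using v half by (intro mult_left_mono) auto
    then show "0 \<le> 1 - v * (1 - 1/n)" using v by linarith
  qed (rule exp_minus_ge)
  also have "\<dots> = exp (- (real d * (v * (1 - 1/n))))" by (simp add: exp_of_nat_mult[symmetric])
  also have "\<dots> \<le> exp (- (vmin * \<zeta> * n / 2))"
  proof -
    have "vmin * \<zeta> * n / 2 = (\<zeta> * n) * (vmin * (1/2))" by simp
    also have "\<dots> \<le> real d * (v * (1 - 1/n))"
      using d vmin half \<zeta> v by (intro mult_mono) auto
    finally show ?thesis by simp
  qed
  finally show ?thesis .
qed

lemma expectation_ea_step_potential_le:
  fixes c \<zeta> v vmin :: real
  assumes n: "2 \<le> n" and c: "1/3 \<le> c" "c \<le> 1" and \<zeta>: "0 < \<zeta>"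
    and X: "exp (4 * \<zeta>) * (exp (\<zeta> - 1) + \<zeta>) \<le> c - 1/n"
    and v: "0 < v" "v \<le> exp (-c)" and vmin: "0 \<le> vmin" "vmin \<le> v"
  shows "measure_pmf.expectation (ea_step n f x) (\<lambda>y. (1 - v) ^ hamming_dist n z y)
         \<le> (1 - v * exp (-c/n)) ^ hamming_dist n z x + exp (- (vmin * \<zeta> * n / 2))"
proof -
  define d where "d = hamming_dist n z x"
  have "exp (-c) < 1" using c by simp
  then have v1: "v < 1" using v by linarith
  have u: "0 < 1 - v" "1 - v \<le> 1" and p: "0 \<le> 1 / real n" "1 / real n \<le> 1" using v v1 n by auto
  have "exp (-c/n) \<le> 1" using c n by simp
  then have "v * exp (-c/n) \<le> v" using v by (intro mult_left_le) auto
  then have "1 - v * exp (-c/n) \<ge> 0" using v1 by linarith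
  then have nonneg: "0 \<le> (1 - v * exp (-c/n)) ^ d" by simp
  note step = expectation_ea_step_le_max[of n f x "1 - v" z, folded d_def]
  show ?thesis
  proof (cases "real d \<le> \<zeta> * n")
    case True
    have "measure_pmf.expectation (ea_step n f x) (\<lambda>y. (1 - v) ^ hamming_dist n z y)
       \<le> (1 - v)^d * (1 + (1 - 1/real n)^(n - d) * ((1 + (1/real n) * (1/(1 - v) - 1))^d - 1)
           + real d * (1/real n) * ((1 + (1/real n) * (1/(1 - v) - 1))^(d - 1) - 1))"
      using step expectation_max_power_hamming_dist_le[OF p u, of n z x] unfolding d_def by simp
    also have "\<dots> \<le> (1 - v * exp (-c/n))^d"
      using n hamming_dist_le[of n z x]
      by (intro potential_drift_near_optimum[OF _ c X v True]) (simp_all add: d_def)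
    finally show ?thesis unfolding d_def by (meson add_increasing2 exp_ge_zero)
  next
    case False
    have "measure_pmf.expectation (ea_step n f x) (\<lambda>y. (1 - v) ^ hamming_dist n z y)
       \<le> (1 - v)^d * (1 + (1/real n) * (1/(1 - v) - 1))^d"
      using step expectation_max_power_hamming_dist_le_crude[OF p u, of n z x] unfolding d_def by simp
    also have "\<dots> \<le> exp (- (vmin * \<zeta> * n / 2))"
      using False by (intro potential_far_from_optimum[OF n \<zeta> v(1) v1 vmin]) simp
    finally show ?thesis using nonneg unfolding d_def by simp
  qed
qed

lemma expectation_ea_init_potential:
  fixes u :: real assumes "0 \<le> u"
  shows "measure_pmf.expectation (ea_init n) (\<lambda>x. u ^ hamming_dist n z x) = ((u + 1) / 2)^n"
proof -
  have "u ^ hamming_dist n z x = (\<Prod>i<n. if x i \<noteq> z i then u else 1)" for x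
    by (simp add: prod_if_eq_power hamming_dist_def)
  then have "measure_pmf.expectation (ea_init n) (\<lambda>x. u ^ hamming_dist n z x)
      = measure_pmf.expectation (flip_pmf n (1/2)) (\<lambda>x. \<Prod>i<n. (\<lambda>i b. if b \<noteq> z i then u else 1) i (x i))"
    by (simp add: ea_init_def flip_pmf_def)
  also have "\<dots> = (\<Prod>i<n. (u + 1) / 2)"
    using assms by (subst expectation_flip_pmf_prod) (auto intro!: prod.cong simp del: prod_constant)
  finally show ?thesis by simp
qed

lemma nn_integral_ea_step_eq_expectation:
  assumes "x \<in> bitstrings n" "\<And>y. 0 \<le> g y"
  shows "(\<integral>\<^sup>+y. ennreal (g y) \<partial>ea_step n f x) = ennreal (measure_pmf.expectation (ea_step n f x) g)"
  using finite_set_pmf_ea_step[OF assms(1)] assms(2)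
  by (intro nn_integral_eq_integral) (auto intro: integrable_measure_pmf_finite)

section \<open>The potential along a run\<close>

text \<open>One step turns the weight v into v e^(-c/n); read backwards from the horizon h, the
  weight used at time t is potential_weight c n (h - t), which starts from e^(-c), the largest
  weight the one-step drift bound admits.\<close>

definition potential_weight :: "real \<Rightarrow> nat \<Rightarrow> nat \<Rightarrow> real" where
  "potential_weight c n s = exp (- (c * (real s + n) / n))"

lemma potential_weight_Suc:
  "0 < n \<Longrightarrow> potential_weight c n (Suc s) = potential_weight c n s * exp (-c/n)"
  by (simp add: potential_weight_def field_simps flip: exp_add)

lemma potential_weight_pos: "0 < potential_weight c n s"
  by (simp add: potential_weight_def)

lemma potential_weight_le_exp:
  assumes "0 \<le> c" "0 < n" shows "potential_weight c n s \<le> exp (-c)"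
proof -
  have "c \<le> c * (real s + n) / n" using assms by (simp add: field_simps)
  then show ?thesis by (simp add: potential_weight_def)
qed

lemma potential_weight_le_one: "0 \<le> c \<Longrightarrow> potential_weight c n s \<le> 1"
  by (simp add: potential_weight_def)

lemma potential_weight_antimono:
  assumes "0 \<le> c" "s \<le> t" shows "potential_weight c n t \<le> potential_weight c n s"
proof -
  have "c * (real s + n) / n \<le> c * (real t + n) / n"
    using assms by (intro divide_right_mono mult_left_mono) auto
  then show ?thesis by (simp add: potential_weight_def)
qed

context unique_minimizer
begin

lemma nn_integral_potential_ea_traj_le:
  fixes c \<zeta> :: real and h t0 :: nat
  assumes n: "2 \<le> n" and c: "1/3 \<le> c" "c \<le> 1" and \<zeta>: "0 < \<zeta>"
    and X: "exp (4 * \<zeta>) * (exp (\<zeta> - 1) + \<zeta>) \<le> c - 1 / real n" and h: "h \<le> t0"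
  defines "v \<equiv> potential_weight c n" and "\<epsilon> \<equiv> exp (- (potential_weight c n t0 * \<zeta> * n / 2))"
  shows "\<tau> \<le> h \<Longrightarrow> (\<integral>\<^sup>+xs. ennreal ((1 - v (h - \<tau>)) ^ hamming_dist n z (last xs)) \<partial>ea_traj n f \<tau>)
          \<le> ennreal (((2 - v h) / 2)^n + real \<tau> * \<epsilon>)"
proof (induction \<tau>)
  case 0
  have "(\<integral>\<^sup>+xs. ennreal ((1 - v (h - 0)) ^ hamming_dist n z (last xs)) \<partial>ea_traj n f 0)
      = (\<integral>\<^sup>+x. ennreal ((1 - v h) ^ hamming_dist n z x) \<partial>ea_init n)"
    by (simp add: nn_integral_map_pmf)
  also have "\<dots> = ennreal (measure_pmf.expectation (ea_init n) (\<lambda>x. (1 - v h) ^ hamming_dist n z x))"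
    using potential_weight_le_one[of c n h] c finite_subset[OF set_pmf_ea_init_subset finite_bitstrings]
    by (intro nn_integral_eq_integral) (auto intro: integrable_measure_pmf_finite simp: v_def)
  also have "\<dots> = ennreal (((2 - v h) / 2)^n)"
    using potential_weight_le_one[of c n h] c by (subst expectation_ea_init_potential) (auto simp: v_def)
  finally show ?case by simp
next
  case (Suc t)
  define s where "s = h - Suc t"
  have hs: "h - t = Suc s" using Suc.prems by (simp add: s_def)
  have c0: "0 \<le> c" and n0: "0 < n" using c n by auto
  have step: "(\<integral>\<^sup>+y. ennreal ((1 - v s) ^ hamming_dist n z y) \<partial>ea_step n f (last xs))
        \<le> ennreal ((1 - v (h - t)) ^ hamming_dist n z (last xs)) + ennreal \<epsilon>"
    if xs: "xs \<in> set_pmf (ea_traj n f t)" for xs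
  proof -
    have "last xs \<in> bitstrings n" using set_pmf_ea_traj[OF xs] by auto
    then have "(\<integral>\<^sup>+y. ennreal ((1 - v s) ^ hamming_dist n z y) \<partial>ea_step n f (last xs))
        = ennreal (measure_pmf.expectation (ea_step n f (last xs)) (\<lambda>y. (1 - v s) ^ hamming_dist n z y))"
      using potential_weight_le_one[OF c0] by (intro nn_integral_ea_step_eq_expectation) (simp_all add: v_def)
    also have "\<dots> \<le> ennreal ((1 - v (h - t)) ^ hamming_dist n z (last xs) + \<epsilon>)"
      unfolding hs v_def potential_weight_Suc[OF n0] \<epsilon>_def
      using potential_weight_antimono[OF c0, of s t0] Suc.prems h
      by (intro ennreal_leI expectation_ea_step_potential_le[OF n c \<zeta> X potential_weight_pos
            potential_weight_le_exp[OF c0 n0]]) (auto simp: s_def potential_weight_def)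
    also have "\<dots> = ennreal ((1 - v (h - t)) ^ hamming_dist n z (last xs)) + ennreal \<epsilon>"
      using potential_weight_le_one[OF c0, of n "h - t"] by (intro ennreal_plus) (auto simp: \<epsilon>_def v_def)
    finally show ?thesis .
  qed
  have "(\<integral>\<^sup>+xs. ennreal ((1 - v (h - Suc t)) ^ hamming_dist n z (last xs)) \<partial>ea_traj n f (Suc t))
      = (\<integral>\<^sup>+xs. (\<integral>\<^sup>+y. ennreal ((1 - v s) ^ hamming_dist n z y) \<partial>ea_step n f (last xs)) \<partial>ea_traj n f t)"
    by (simp add: nn_integral_map_pmf s_def)
  also have "\<dots> \<le> (\<integral>\<^sup>+xs. ennreal ((1 - v (h - t)) ^ hamming_dist n z (last xs)) + ennreal \<epsilon> \<partial>ea_traj n f t)"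
    by (intro nn_integral_mono_AE AE_pmfI step)
  also have "\<dots> = (\<integral>\<^sup>+xs. ennreal ((1 - v (h - t)) ^ hamming_dist n z (last xs)) \<partial>ea_traj n f t) + ennreal \<epsilon>"
    by (subst nn_integral_add) (auto simp: measure_pmf.emeasure_space_1)
  also have "\<dots> \<le> ennreal (((2 - v h) / 2)^n + real t * \<epsilon>) + ennreal \<epsilon>"
    using Suc by (intro add_right_mono) auto
  also have "\<dots> = ennreal (((2 - v h) / 2)^n + real (Suc t) * \<epsilon>)"
    using potential_weight_le_one[OF c0, of n h]
    by (subst ennreal_plus[symmetric]) (auto simp: \<epsilon>_def v_def algebra_simps)
  finally show ?case .
qed

lemma prob_not_optimal_ge:
  fixes c \<zeta> :: real and h t0 :: nat
  assumes n: "2 \<le> n" and c: "1/3 \<le> c" "c \<le> 1" and \<zeta>: "0 < \<zeta>"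
    and X: "exp (4 * \<zeta>) * (exp (\<zeta> - 1) + \<zeta>) \<le> c - 1 / real n" and h: "h \<le> t0"
  defines "v \<equiv> potential_weight c n t0"
  shows "1 - (exp (- (real n * v / 2)) + real t0 * exp (- (v * \<zeta> * n / 2)))
         \<le> measure_pmf.prob (ea_traj n f h) {xs. \<forall>x\<in>set xs. f x \<noteq> opt_value n f}"
proof -
  define \<epsilon> where "\<epsilon> = exp (- (v * \<zeta> * n / 2))"
  define hit where "hit = {xs. last xs = z}"
  have c0: "0 \<le> c" using c by simp
  have vh: "v \<le> potential_weight c n h" "0 \<le> potential_weight c n h" "potential_weight c n h \<le> 1"
    using potential_weight_antimono[OF c0 h] potential_weight_pos[of c n h] potential_weight_le_one[OF c0]
    by (auto simp: v_def)
  have "emeasure (measure_pmf (ea_traj n f h)) hit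
      \<le> (\<integral>\<^sup>+xs. ennreal ((1 - potential_weight c n (h - h)) ^ hamming_dist n z (last xs)) \<partial>ea_traj n f h)"
    unfolding nn_integral_indicator[symmetric, OF sets_measure_pmf[THEN equalityD2, THEN subsetD, OF UNIV_I]]
    by (intro nn_integral_mono) (auto simp: hit_def indicator_def)
  also have "\<dots> \<le> ennreal (((2 - potential_weight c n h) / 2)^n + real h * \<epsilon>)"
    unfolding \<epsilon>_def v_def by (rule nn_integral_potential_ea_traj_le[OF n c \<zeta> X h]) simp
  finally have "ennreal (measure_pmf.prob (ea_traj n f h) hit)
      \<le> ennreal (((2 - potential_weight c n h) / 2)^n + real h * \<epsilon>)"
    by (simp only: measure_pmf.emeasure_eq_measure)
  moreover have "0 \<le> ((2 - potential_weight c n h) / 2)^n + real h * \<epsilon>"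
    using vh by (simp add: \<epsilon>_def)
  ultimately have "measure_pmf.prob (ea_traj n f h) hit \<le> ((2 - potential_weight c n h) / 2)^n + real h * \<epsilon>"
    by (simp add: ennreal_le_iff)
  also have "((2 - potential_weight c n h) / 2)^n \<le> exp (- (real n * v / 2))"
  proof -
    have "((2 - potential_weight c n h) / 2)^n \<le> exp (- (potential_weight c n h / 2))^n"
      using vh exp_minus_ge[of "potential_weight c n h / 2"] by (intro power_mono) auto
    also have "\<dots> = exp (- (real n * potential_weight c n h / 2))" by (simp add: exp_of_nat_mult[symmetric])
    also have "\<dots> \<le> exp (- (real n * v / 2))" using vh by (simp add: mult_left_mono)
    finally show ?thesis .
  qed
  also have "real h * \<epsilon> \<le> real t0 * \<epsilon>" using h by (intro mult_right_mono) (auto simp: \<epsilon>_def)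
  finally have hit_le: "measure_pmf.prob (ea_traj n f h) hit \<le> exp (- (real n * v / 2)) + real t0 * \<epsilon>"
    by simp
  have "AE xs in ea_traj n f h. xs \<in> UNIV - hit \<longrightarrow> xs \<in> {xs. \<forall>x\<in>set xs. f x \<noteq> opt_value n f}"
  proof (rule AE_pmfI, safe)
    fix xs x assume xs: "xs \<in> set_pmf (ea_traj n f h)" and "xs \<notin> hit" "x \<in> set xs"
      and "f x = opt_value n f"
    then have "x = z" using set_pmf_ea_traj[OF xs] unique by (auto simp: opt_value_eq)
    then show False using set_pmf_ea_traj(3)[OF xs] \<open>xs \<notin> hit\<close> \<open>x \<in> set xs\<close> by (simp add: hit_def)
  qed
  then have "measure_pmf.prob (ea_traj n f h) (UNIV - hit)
      \<le> measure_pmf.prob (ea_traj n f h) {xs. \<forall>x\<in>set xs. f x \<noteq> opt_value n f}"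
    by (intro measure_pmf.finite_measure_mono_AE) auto
  moreover have "measure_pmf.prob (ea_traj n f h) (UNIV - hit) = 1 - measure_pmf.prob (ea_traj n f h) hit"
    using measure_pmf.prob_compl[of hit "ea_traj n f h"] by simp
  ultimately show ?thesis using hit_le by (simp add: \<epsilon>_def)
qed

end

lemma expected_opt_time_ge:
  assumes "\<And>h. h < t0 \<Longrightarrow> 1 - \<beta> \<le> measure_pmf.prob (ea_traj n f h) {xs. \<forall>x\<in>set xs. f x \<noteq> opt_value n f}"
  shows "ennreal (real t0 * (1 - \<beta>)) \<le> expected_opt_time n f"
proof -
  define P where "P t = measure_pmf.prob (ea_traj n f t) {xs. \<forall>x\<in>set xs. f x \<noteq> opt_value n f}" for t
  have "ennreal (real t0 * (1 - \<beta>)) \<le> (\<Sum>t<t0. ennreal (P t))"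
  proof (cases "0 \<le> 1 - \<beta>")
    case True
    then have "ennreal (real t0 * (1 - \<beta>)) = (\<Sum>t<t0. ennreal (1 - \<beta>))"
      by (simp add: ennreal_mult ennreal_of_nat_eq_real_of_nat)
    also have "\<dots> \<le> (\<Sum>t<t0. ennreal (P t))"
      using assms by (intro sum_mono ennreal_leI) (auto simp: P_def)
    finally show ?thesis .
  next
    case False
    then have "real t0 * (1 - \<beta>) \<le> 0" by (simp add: mult_nonneg_nonpos)
    then have "ennreal (real t0 * (1 - \<beta>)) = 0" by (simp add: ennreal_eq_0_iff)
    then show ?thesis by simp
  qed
  also have "\<dots> \<le> (\<Sum>t. ennreal (P t))" by (rule sum_le_suminf) auto
  finally show ?thesis unfolding expected_opt_time_def P_def .
qed

section \<open>Choice of the parameters\<close>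

lemma drift_constant_le:
  fixes \<zeta> :: real assumes \<zeta>: "0 < \<zeta>" "\<zeta> \<le> 1/40"
  shows "exp (4 * \<zeta>) * (exp (\<zeta> - 1) + \<zeta>) \<le> (1 + 20 * \<zeta>) / exp 1"
proof -
  have "exp (4 * \<zeta>) \<le> 1 + 8 * \<zeta>" using exp_bound_lemma[of "4 * \<zeta>"] \<zeta> by simp
  moreover have "exp \<zeta> \<le> 1 + 2 * \<zeta>" using exp_bound_lemma[of \<zeta>] \<zeta> by simp
  moreover have "exp 1 * \<zeta> \<le> 3 * \<zeta>" using exp_le \<zeta> by (intro mult_right_mono) auto
  ultimately have "exp (4 * \<zeta>) \<le> 1 + 8 * \<zeta>" "exp \<zeta> + exp 1 * \<zeta> \<le> 1 + 5 * \<zeta>" by simp_all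
  then have "exp (4 * \<zeta>) * (exp \<zeta> + exp 1 * \<zeta>) \<le> (1 + 8 * \<zeta>) * (1 + 5 * \<zeta>)"
    using \<zeta> by (intro mult_mono) auto
  also have "\<dots> \<le> 1 + 20 * \<zeta>" using \<zeta> by (simp add: algebra_simps power2_eq_square[symmetric])
  finally have "exp (4 * \<zeta>) * (exp \<zeta> + exp 1 * \<zeta>) / exp 1 \<le> (1 + 20 * \<zeta>) / exp 1"
    by (simp add: divide_right_mono)
  moreover have "exp (4 * \<zeta>) * (exp (\<zeta> - 1) + \<zeta>) = exp (4 * \<zeta>) * (exp \<zeta> + exp 1 * \<zeta>) / exp 1"
    by (simp add: exp_diff field_simps)
  ultimately show ?thesis by simp
qed

context
  fixes \<delta> :: real and n :: nat
  assumes \<delta>: "0 < \<delta>" "\<delta> \<le> 1/4" and n: "1 \<le> n"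
begin

lemma horizon_le: "real (nat \<lceil>(1 - \<delta>) * exp 1 * real n * ln (real n)\<rceil>) \<le> 3 * real n * ln (real n) + 1"
proof -
  define x where "x = (1 - \<delta>) * exp 1 * real n * ln (real n)"
  have L0: "0 \<le> ln (real n)" using n by simp
  have "(1 - \<delta>) * exp 1 \<le> 1 * exp 1" using \<delta> by (intro mult_right_mono) auto
  then have "(1 - \<delta>) * exp 1 \<le> 3" using exp_le by linarith
  then have "(1 - \<delta>) * exp 1 * (real n * ln (real n)) \<le> 3 * (real n * ln (real n))"
    using L0 by (intro mult_right_mono) auto
  then have "x \<le> 3 * real n * ln (real n)" by (simp add: x_def mult.assoc)
  moreover have "0 \<le> x" using \<delta> L0 by (simp add: x_def)
  then have "real (nat \<lceil>x\<rceil>) = of_int \<lceil>x\<rceil>" by simp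
  ultimately show ?thesis using of_int_ceiling_le_add_one[of x] unfolding x_def by linarith
qed

lemma potential_weight_horizon_ge:
  defines "c \<equiv> (1 + \<delta>/2) / exp 1" and "t0 \<equiv> nat \<lceil>(1 - \<delta>) * exp 1 * real n * ln (real n)\<rceil>"
  shows "exp (-2) * real n powr (\<delta>/2) \<le> real n * potential_weight c n t0"
proof -
  define L where "L = ln (real n)"
  have n0: "0 < real n" and L0: "0 \<le> L" using n by (auto simp: L_def)
  have c: "0 < c" "c \<le> 1" "c * exp 1 = 1 + \<delta>/2"
    using \<delta> exp_ge_add_one_self[of 1] by (auto simp: c_def field_simps)
  have "real t0 \<le> (1 - \<delta>) * exp 1 * real n * L + 1"
    using \<delta> L0 of_int_ceiling_le_add_one[of "(1 - \<delta>) * exp 1 * real n * L"] by (simp add: t0_def L_def)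
  then have "c * (real t0 + n) / n \<le> c * ((1 - \<delta>) * exp 1 * real n * L + 1 + n) / n"
    using c n0 by (intro divide_right_mono mult_left_mono) auto
  also have "\<dots> = (c * exp 1) * (1 - \<delta>) * L + c / n + c" using n0 by (simp add: field_simps)
  also have "\<dots> \<le> (1 - \<delta>/2) * L + 2"
  proof -
    have "(1 + \<delta>/2) * (1 - \<delta>) \<le> 1 - \<delta>/2" using \<delta> by (simp add: algebra_simps)
    then have "(1 + \<delta>/2) * (1 - \<delta>) * L \<le> (1 - \<delta>/2) * L" using L0 by (intro mult_right_mono)
    moreover have "c / n \<le> 1" using c n by (simp add: divide_le_eq)
    ultimately show ?thesis using c by simp
  qed
  finally have "-2 + (\<delta>/2) * L \<le> L - c * (real t0 + n) / n" by (simp add: algebra_simps)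
  have "exp (-2) * real n powr (\<delta>/2) = exp (-2 + (\<delta>/2) * L)"
    unfolding exp_add using n0 by (simp add: powr_def L_def mult.commute)
  also have "\<dots> \<le> exp (L + - (c * (real t0 + n) / n))"
    using \<open>-2 + (\<delta>/2) * L \<le> L - c * (real t0 + n) / n\<close> by simp
  also have "\<dots> = real n * potential_weight c n t0"
    using n0 by (simp add: L_def potential_weight_def exp_diff exp_minus divide_inverse)
  finally show ?thesis .
qed

lemma failure_bound_le:
  fixes \<zeta> :: real assumes \<zeta>: "0 < \<zeta>"
  defines "c \<equiv> (1 + \<delta>/2) / exp 1" and "t0 \<equiv> nat \<lceil>(1 - \<delta>) * exp 1 * real n * ln (real n)\<rceil>"
  defines "v \<equiv> potential_weight c n t0"
  shows "exp (- (real n * v / 2)) + real t0 * exp (- (v * \<zeta> * n / 2))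
         \<le> exp (- (exp (-2) / 2 * real n powr (\<delta>/2)))
           + (3 * real n * ln (real n) + 1) * exp (- (\<zeta> * exp (-2) / 2 * real n powr (\<delta>/2)))"
proof -
  have v: "exp (-2) * real n powr (\<delta>/2) \<le> real n * v"
    unfolding v_def c_def t0_def by (rule potential_weight_horizon_ge)
  have "exp (- (real n * v / 2)) \<le> exp (- (exp (-2) / 2 * real n powr (\<delta>/2)))" using v by simp
  moreover have "real t0 * exp (- (v * \<zeta> * n / 2))
      \<le> (3 * real n * ln (real n) + 1) * exp (- (\<zeta> * exp (-2) / 2 * real n powr (\<delta>/2)))"
  proof (rule mult_mono)
    show "real t0 \<le> 3 * real n * ln (real n) + 1" unfolding t0_def by (rule horizon_le)
    have "\<zeta> * (exp (-2) * real n powr (\<delta>/2)) \<le> \<zeta> * (real n * v)" using v \<zeta> by (intro mult_left_mono) auto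
    then show "exp (- (v * \<zeta> * n / 2)) \<le> exp (- (\<zeta> * exp (-2) / 2 * real n powr (\<delta>/2)))"
      by (simp add: algebra_simps)
    show "0 \<le> 3 * real n * ln (real n) + 1" using n by simp
  qed simp
  ultimately show ?thesis by (rule add_mono)
qed

end

lemma (in unique_minimizer) expected_opt_time_ge_horizon:
  fixes c \<zeta> :: real and t0 :: nat
  assumes "2 \<le> n" "1/3 \<le> c" "c \<le> 1" "0 < \<zeta>" "exp (4 * \<zeta>) * (exp (\<zeta> - 1) + \<zeta>) \<le> c - 1 / real n"
  defines "v \<equiv> potential_weight c n t0"
  shows "ennreal (real t0 * (1 - (exp (- (real n * v / 2)) + real t0 * exp (- (v * \<zeta> * n / 2)))))
         \<le> expected_opt_time n f"
  unfolding v_def by (rule expected_opt_time_ge, rule prob_not_optimal_ge[OF assms(1-5)]) simp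

lemma tendsto_stretched_exp_bound:
  fixes a b k :: real assumes "0 < a" "0 < b" "0 < k"
  shows "((\<lambda>x. exp (- (a * x powr k)) + (3 * x * ln x + 1) * exp (- (b * x powr k))) \<longlongrightarrow> 0) at_top"
proof -
  have "((\<lambda>x. exp (- a * x powr k)) \<longlongrightarrow> 0) at_top" using assms by real_asymp
  moreover have "((\<lambda>x. (3 * x * ln x + 1) * exp (- b * x powr k)) \<longlongrightarrow> 0) at_top" using assms by real_asymp
  ultimately show ?thesis using tendsto_add by fastforce
qed

lemma eventually_expected_opt_time_ge:
  fixes \<delta> :: real assumes \<delta>: "0 < \<delta>" "\<delta> \<le> 1/4"
  shows "\<forall>\<^sub>F n in sequentially. \<forall>f. (\<exists>!z. z \<in> bitstrings n \<and> (\<forall>y\<in>bitstrings n. f z \<le> f y)) \<longrightarrow>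
           ennreal ((1 - 2 * \<delta>) * exp 1 * real n * ln (real n)) \<le> expected_opt_time n f"
proof -
  define c where "c = (1 + \<delta>/2) / exp 1"
  define \<zeta> where "\<zeta> = \<delta> / 80"
  have \<zeta>: "0 < \<zeta>" using \<delta> by (simp add: \<zeta>_def)
  have c: "1/3 \<le> c" "c \<le> 1"
    using \<delta> exp_le exp_ge_add_one_self[of 1] by (auto simp: c_def field_simps)
  have "(1 + 20 * \<zeta>) / exp 1 = c - \<delta> / (4 * exp 1)" by (simp add: \<zeta>_def c_def field_simps)
  then have X: "exp (4 * \<zeta>) * (exp (\<zeta> - 1) + \<zeta>) \<le> c - \<delta> / (4 * exp 1)"
    using drift_constant_le[OF \<zeta>] \<delta> by (simp add: \<zeta>_def)
  define F where "F x = exp (- (exp (-2) / 2 * x powr (\<delta>/2)))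
      + (3 * x * ln x + 1) * exp (- (\<zeta> * exp (-2) / 2 * x powr (\<delta>/2)))" for x :: real
  have "(F \<longlongrightarrow> 0) at_top" unfolding F_def using \<delta> \<zeta> by (intro tendsto_stretched_exp_bound) auto
  then have "(\<lambda>n. F (real n)) \<longlonglongrightarrow> 0" by (rule filterlim_compose[OF _ filterlim_real_sequentially])
  then have "\<forall>\<^sub>F n in sequentially. 2 \<le> n \<and> 1 / real n < \<delta> / (4 * exp 1) \<and> F (real n) < \<delta>"
    using \<delta> eventually_ge_at_top order_tendstoD(2)[OF lim_inverse_n', of "\<delta> / (4 * exp 1)"]
      order_tendstoD(2)[of _ 0 _ \<delta>] by (intro eventually_conj) auto
  then show ?thesis
  proof (rule eventually_mono, intro allI impI)
    fix n :: nat and f :: "(nat \<Rightarrow> bool) \<Rightarrow> real"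
    assume n: "2 \<le> n \<and> 1 / real n < \<delta> / (4 * exp 1) \<and> F (real n) < \<delta>"
      and "\<exists>!z. z \<in> bitstrings n \<and> (\<forall>y\<in>bitstrings n. f z \<le> f y)"
    then obtain z where z: "unique_minimizer n f z" by (elim unique_minimizerE)
    define t0 where "t0 = nat \<lceil>(1 - \<delta>) * exp 1 * real n * ln (real n)\<rceil>"
    define v where "v = potential_weight c n t0"
    define \<beta> where "\<beta> = exp (- (real n * v / 2)) + real t0 * exp (- (v * \<zeta> * n / 2))"
    have "\<beta> \<le> F (real n)"
      unfolding \<beta>_def v_def t0_def c_def F_def using \<delta> n \<zeta> by (intro failure_bound_le) auto
    then have \<beta>: "\<beta> \<le> \<delta>" using n by linarith
    have E: "ennreal (real t0 * (1 - \<beta>)) \<le> expected_opt_time n f"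
      unfolding \<beta>_def v_def using n c \<zeta> X
      by (intro unique_minimizer.expected_opt_time_ge_horizon[OF z]) auto
    have "(1 - 2 * \<delta>) * exp 1 * real n * ln (real n) \<le> real t0 * (1 - \<beta>)"
    proof -
      define x0 where "x0 = exp 1 * real n * ln (real n)"
      have "0 \<le> x0" using n by (simp add: x0_def)
      have "(1 - 2 * \<delta>) * x0 \<le> (1 - \<delta>) * ((1 - \<delta>) * x0)"
        using \<open>0 \<le> x0\<close> mult_right_mono[of "1 - 2 * \<delta>" "(1 - \<delta>) * (1 - \<delta>)" x0] by (simp add: algebra_simps)
      also have "\<dots> \<le> (1 - \<beta>) * real t0"
        using \<beta> \<delta> \<open>0 \<le> x0\<close> by (intro mult_mono) (auto simp: t0_def x0_def mult.assoc)
      finally show ?thesis by (simp add: x0_def mult_ac)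
    qed
    then show "ennreal ((1 - 2 * \<delta>) * exp 1 * real n * ln (real n)) \<le> expected_opt_time n f"
      using E by (rule order_trans[OF ennreal_leI])
  qed
qed

lemma vanishing_parameter_exists:
  fixes P :: "real \<Rightarrow> nat \<Rightarrow> bool"
  assumes eventually: "\<And>\<delta>. 0 < \<delta> \<Longrightarrow> \<forall>\<^sub>F n in sequentially. P \<delta> n" and one: "\<And>n. P 1 n"
  shows "\<exists>\<epsilon>. \<epsilon> \<longlonglongrightarrow> 0 \<and> (\<forall>n. P (\<epsilon> n) n)"
proof -
  define K where "K n = (GREATEST k. k \<le> n \<and> P (1 / (real k + 1)) n)" for n
  have K: "K n \<le> n \<and> P (1 / (real (K n) + 1)) n" for n
    unfolding K_def by (rule GreatestI_nat[where k=0 and b=n]) (use one in auto)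
  have K_ge: "k \<le> K n" if "k \<le> n" "P (1 / (real k + 1)) n" for k n
    unfolding K_def by (rule Greatest_le_nat[where b=n]) (use that in auto)
  define \<epsilon> where "\<epsilon> n = 1 / (real (K n) + 1)" for n
  have "\<epsilon> \<longlonglongrightarrow> 0"
  proof (rule order_tendstoI)
    fix a :: real assume "a < 0"
    moreover have "0 < \<epsilon> n" for n by (simp add: \<epsilon>_def)
    ultimately show "\<forall>\<^sub>F n in sequentially. a < \<epsilon> n"
      by (intro always_eventually allI) (rule less_trans)
  next
    fix r :: real assume "0 < r"
    then obtain k where k: "inverse (real (Suc k)) < r" using reals_Archimedean by blast
    have "\<forall>\<^sub>F n in sequentially. P (1 / (real k + 1)) n \<and> k \<le> n"
      using eventually[of "1 / (real k + 1)"] eventually_ge_at_top[of k] by (intro eventually_conj) auto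
    then show "\<forall>\<^sub>F n in sequentially. \<epsilon> n < r"
    proof (rule eventually_mono)
      fix n assume "P (1 / (real k + 1)) n \<and> k \<le> n"
      then have "\<epsilon> n \<le> 1 / (real k + 1)" using K_ge by (simp add: \<epsilon>_def frac_le)
      then show "\<epsilon> n < r" using k by (simp add: inverse_eq_divide add.commute)
    qed
  qed
  then show ?thesis using K by (auto simp: \<epsilon>_def)
qed

theorem corollary7:
  shows "\<exists>\<epsilon>::nat \<Rightarrow> real. \<epsilon> \<longlonglongrightarrow> 0 \<and>
    (\<forall>n>0. \<forall>f::(nat \<Rightarrow> bool) \<Rightarrow> real.
       (\<exists>!z. z \<in> bitstrings n \<and> (\<forall>y\<in>bitstrings n. f z \<le> f y)) \<longrightarrow>
       expected_opt_time n f \<ge> ennreal ((1 - \<epsilon> n) * exp 1 * real n * ln (real n)))"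
proof -
  define P where "P \<delta> n \<longleftrightarrow> (\<forall>f::(nat \<Rightarrow> bool) \<Rightarrow> real.
       (\<exists>!z. z \<in> bitstrings n \<and> (\<forall>y\<in>bitstrings n. f z \<le> f y)) \<longrightarrow>
       ennreal ((1 - \<delta>) * exp 1 * real n * ln (real n)) \<le> expected_opt_time n f)" for \<delta> n
  have "\<forall>\<^sub>F n in sequentially. P \<delta> n" if "0 < \<delta>" for \<delta>
  proof -
    define \<delta>' where "\<delta>' = min (\<delta>/2) (1/4)"
    have \<delta>': "0 < \<delta>'" "\<delta>' \<le> 1/4" "1 - \<delta> \<le> 1 - 2 * \<delta>'" using that by (auto simp: \<delta>'_def)
    have mono: "(1 - \<delta>) * exp 1 * real n * ln (real n) \<le> (1 - 2 * \<delta>') * exp 1 * real n * ln (real n)" for n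
      using \<delta>'(3) by (cases "n = 0") (auto simp: mult.assoc intro!: mult_right_mono)
    show ?thesis
      using eventually_expected_opt_time_ge[OF \<delta>'(1,2)]
    proof (rule eventually_mono)
      fix n assume "\<forall>f. (\<exists>!z. z \<in> bitstrings n \<and> (\<forall>y\<in>bitstrings n. f z \<le> f y)) \<longrightarrow>
          ennreal ((1 - 2 * \<delta>') * exp 1 * real n * ln (real n)) \<le> expected_opt_time n f"
      then show "P \<delta> n" unfolding P_def using order_trans[OF ennreal_leI[OF mono[of n]]] by blast
    qed
  qed
  moreover have "P 1 n" for n by (simp add: P_def)
  ultimately obtain \<epsilon> where "\<epsilon> \<longlonglongrightarrow> 0" "\<forall>n. P (\<epsilon> n) n"
    using vanishing_parameter_exists[of P] by blast
  then show ?thesis unfolding P_def by blast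
qed

end
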